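(* Let $p$ be a prime and $v$ an integer with $1<v<p-1$ and $p\not\equiv1\pmod v$. Then for every permutation $\pi$ of $\{1,\dots,p-1\}$, the sequence $\pi_v=(\pi(1)\,\%\,v,\dots,\pi(p-1)\,\%\,v)$ has least period $p-1$.
   Context: $x\,\%\,v$ denotes the least nonnegative remainder modulo $v$. The sequence of length $p-1$ is regarded cyclically; its least period is the smallest $\rho>0$ with $\pi_v(i+\rho)=\pi_v(i)$ for all indices $i$ modulo $p-1$. *)

theory Defs
  imports "HOL-Number_Theory.Number_Theory"
begin

definition is_cyc_period :: "nat \<Rightarrow> (nat \<Rightarrow> 'a) \<Rightarrow> nat \<Rightarrow> bool" where
  "is_cyc_period n a \<rho> \<longleftrightarrow> 0 < \<rho> \<and> (\<forall>i\<in>{1..n}. a (((i - 1 + \<rho>) mod n) + 1) = a i)"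

definition least_cyc_period :: "nat \<Rightarrow> (nat \<Rightarrow> 'a) \<Rightarrow> nat" where
  "least_cyc_period n a = (LEAST \<rho>. is_cyc_period n a \<rho>)"

end

theory Submission
  imports Defs
begin

(* Among 1, ..., p - 1 the residue 1 mod v occurs exactly once more than the residue 0,
   because v does not divide p - 1. A period rho < p - 1 of the residue sequence yields the
   period d = gcd rho (p - 1), a proper divisor of p - 1; the sequence is then made of
   (p - 1) / d > 1 copies of its first d terms, so this number divides every value count
   and hence their difference 1. *)

lemma periodic_add_mult:
  fixes j k d :: nat
  assumes "\<And>j. f (j + d) = f j"
  shows "f (j + k * d) = f j"
proof (induction k)
  case (Suc k)
  have "f (j + Suc k * d) = f ((j + k * d) + d)"
    by (simp add: algebra_simps)
  also have "\<dots> = f (j + k * d)"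
    by (rule assms)
  finally show ?case
    using Suc.IH by simp
qed simp

lemma periodic_gcd:
  fixes \<rho> n :: nat
  assumes "\<And>j. f (j + \<rho>) = f j" and "\<And>j. f (j + n) = f j" and "\<rho> \<noteq> 0"
  shows "f (j + gcd \<rho> n) = f j"
proof -
  obtain x y where xy: "\<rho> * x = n * y + gcd \<rho> n"
    using bezout_nat[OF \<open>\<rho> \<noteq> 0\<close>] by blast
  have "f j = f (j + x * \<rho>)"
    using periodic_add_mult[of f \<rho>] assms(1) by simp
  also have "j + x * \<rho> = (j + gcd \<rho> n) + y * n"
    using xy by (simp add: mult.commute)
  also have "f \<dots> = f (j + gcd \<rho> n)"
    using periodic_add_mult[of f n] assms(2) by blast
  finally show ?thesis ..
qed

lemma sum_periodic:
  fixes f :: "nat \<Rightarrow> 'a::semiring_1"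
  assumes "\<And>j. f (j + d) = f j"
  shows "(\<Sum>j<k * d. f j) = of_nat k * (\<Sum>j<d. f j)"
proof -
  have block: "sum f {m * d..<m * d + d} = (\<Sum>j<d. f j)" for m
  proof -
    have "sum f {m * d..<m * d + d} = (\<Sum>j<d. f (j + m * d))"
      using sum.shift_bounds_nat_ivl[of f 0 "m * d" d]
      by (simp add: atLeast0LessThan add.commute[of _ "m * d"])
    then show ?thesis
      using periodic_add_mult[of f d] assms by simp
  qed
  have "(\<Sum>j<k * d. f j) = (\<Sum>m<k. sum f {m * d..<m * d + d})"
    by (rule sum.nat_group[symmetric])
  also have "\<dots> = of_nat k * (\<Sum>j<d. f j)"
    by (simp add: block)
  finally show ?thesis .
qed

lemma is_cyc_period_iff:
  assumes "0 < n"
  shows "is_cyc_period n a \<rho> \<longleftrightarrow>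
    0 < \<rho> \<and> (\<forall>j. a ((j + \<rho>) mod n + 1) = a (j mod n + 1))"
proof -
  have "(\<forall>i\<in>{1..n}. a ((i - 1 + \<rho>) mod n + 1) = a i) \<longleftrightarrow>
        (\<forall>j. a ((j + \<rho>) mod n + 1) = a (j mod n + 1))"
  proof
    assume per: "\<forall>i\<in>{1..n}. a ((i - 1 + \<rho>) mod n + 1) = a i"
    show "\<forall>j. a ((j + \<rho>) mod n + 1) = a (j mod n + 1)"
    proof
      fix j
      have "j mod n + 1 \<in> {1..n}"
        using assms by (simp add: Suc_leI)
      from per[rule_format, OF this]
      have "a ((j mod n + \<rho>) mod n + 1) = a (j mod n + 1)"
        by simp
      then show "a ((j + \<rho>) mod n + 1) = a (j mod n + 1)"
        by (simp add: mod_add_left_eq)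
    qed
  next
    assume per: "\<forall>j. a ((j + \<rho>) mod n + 1) = a (j mod n + 1)"
    show "\<forall>i\<in>{1..n}. a ((i - 1 + \<rho>) mod n + 1) = a i"
    proof
      fix i assume "i \<in> {1..n}"
      then have "(i - 1) mod n + 1 = i" by auto
      with per[rule_format, of "i - 1"] show "a ((i - 1 + \<rho>) mod n + 1) = a i"
        by simp
    qed
  qed
  then show ?thesis
    unfolding is_cyc_period_def by blast
qed

lemma is_cyc_period_length: "0 < n \<Longrightarrow> is_cyc_period n a n"
  by (simp add: is_cyc_period_iff)

lemma is_cyc_period_gcd:
  assumes "0 < n" and "is_cyc_period n a \<rho>"
  shows "is_cyc_period n a (gcd \<rho> n)"
proof -
  have "0 < \<rho>" and per: "\<And>j. a ((j + \<rho>) mod n + 1) = a (j mod n + 1)"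
    using assms by (simp_all add: is_cyc_period_iff)
  have "a ((j + gcd \<rho> n) mod n + 1) = a (j mod n + 1)" for j
    using periodic_gcd[where f = "\<lambda>j. a (j mod n + 1)", OF per] \<open>0 < \<rho>\<close> by simp
  with assms(1) \<open>0 < \<rho>\<close> show ?thesis
    by (simp add: is_cyc_period_iff)
qed

lemma sum_cyc_shift:
  fixes g :: "nat \<Rightarrow> 'a::comm_monoid_add"
  shows "(\<Sum>i=1..n. g i) = (\<Sum>j<n. g (j mod n + 1))"
proof -
  have "(\<Sum>i=1..n. g i) = (\<Sum>j<n. g (Suc j))"
    using sum.atLeast1_atMost_eq[of g n] by simp
  also have "\<dots> = (\<Sum>j<n. g (j mod n + 1))"
    by (intro sum.cong) auto
  finally show ?thesis .
qed

lemma cyc_period_dvd_sum: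
  fixes w :: "'a \<Rightarrow> int"
  assumes "0 < n" and "is_cyc_period n a d" and "d dvd n"
  shows "int (n div d) dvd (\<Sum>i=1..n. w (a i))"
proof -
  have per: "\<And>j. w (a ((j + d) mod n + 1)) = w (a (j mod n + 1))"
    using assms(1,2) by (simp add: is_cyc_period_iff)
  have "n div d * d = n"
    using assms(3) by simp
  have "(\<Sum>i=1..n. w (a i)) = (\<Sum>j<n. w (a (j mod n + 1)))"
    by (rule sum_cyc_shift)
  also have "\<dots> = (\<Sum>j<n div d * d. w (a (j mod n + 1)))"
    by (simp only: \<open>n div d * d = n\<close>)
  also have "\<dots> = int (n div d) * (\<Sum>j<d. w (a (j mod n + 1)))"
    using per by (rule sum_periodic)
  finally show ?thesis
    by simp
qed

lemma least_cyc_period_eq_length: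
  fixes w :: "'a \<Rightarrow> int"
  assumes "0 < n" and "(\<Sum>i=1..n. w (a i)) = 1"
  shows "least_cyc_period n a = n"
  unfolding least_cyc_period_def
proof (rule Least_equality)
  show "is_cyc_period n a n"
    using assms(1) by (rule is_cyc_period_length)
next
  fix \<rho> assume "is_cyc_period n a \<rho>"
  then have "0 < \<rho>" and "is_cyc_period n a (gcd \<rho> n)"
    using assms(1) is_cyc_period_gcd by (auto simp: is_cyc_period_def)
  then have "int (n div gcd \<rho> n) dvd 1"
    using cyc_period_dvd_sum[of n a "gcd \<rho> n" w] assms by simp
  then have "n div gcd \<rho> n * gcd \<rho> n = gcd \<rho> n"
    by simp
  then have "n = gcd \<rho> n"
    by simp
  also have "\<dots> \<le> \<rho>"
    using \<open>0 < \<rho>\<close> by simp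
  finally show "n \<le> \<rho>" .
qed

lemma sum_mod_eq_one_minus_mod_eq_zero:
  fixes v :: nat
  assumes "1 < v"
  shows "(\<Sum>x=1..n. of_bool (x mod v = 1) - of_bool (x mod v = 0) :: int) =
         (if v dvd n then 0 else 1)"
proof (induction n)
  case 0
  then show ?case by simp
next
  case (Suc n)
  then show ?case
    using assms by (auto simp: mod_Suc dvd_eq_mod_eq_0)
qed

theorem lemma1:
  fixes p v :: nat and \<pi> :: "nat \<Rightarrow> nat"
  assumes "prime p"
    and "1 < v" and "v < p - 1"
    and "\<not> [p = 1] (mod v)"
    and "bij_betw \<pi> {1..p-1} {1..p-1}"
  shows "least_cyc_period (p - 1) (\<lambda>i. \<pi> i mod v) = p - 1"
proof -
  define w :: "nat \<Rightarrow> int" where "w r = of_bool (r = 1) - of_bool (r = 0)" for r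
  have "0 < p - 1"
    using assms(3) by linarith
  then have "\<not> v dvd p - 1"
    using assms(4) cong_altdef_nat[of 1 p v] by simp
  have "(\<Sum>i=1..p-1. w (\<pi> i mod v)) = (\<Sum>x=1..p-1. w (x mod v))"
    using sum.reindex_bij_betw[OF assms(5), of "\<lambda>x. w (x mod v)"] by simp
  also have "\<dots> = 1"
    using sum_mod_eq_one_minus_mod_eq_zero[OF assms(2), of "p - 1"] \<open>\<not> v dvd p - 1\<close>
    by (simp add: w_def)
  finally show ?thesis
    by (rule least_cyc_period_eq_length[OF \<open>0 < p - 1\<close>])
qed

end
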